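(* Let $\Lambda=\{0,1\}^2\subset\mathbb{Z}^2$ (points $(x,y)$) and let $\mu$ be the probability measure on $\{0,1\}^\Lambda$ giving probability $1/4$ to each of the following four configurations (listing the occupied sites, all others being $0$): $\eta^{(1)}$: $\{(0,0)\}$; $\eta^{(2)}$: $\{(0,0),(0,1),(1,0)\}$; $\eta^{(3)}$: $\{(0,1),(1,1)\}$; $\eta^{(4)}$: $\{(1,0),(1,1)\}$. Then $\mu$ is LTI, but there is no probability measure on configurations of a $3\times3$ square $\Lambda'\supset\Lambda$ whose marginal on each of the four $2\times 2$ subsquares of $\Lambda'$ is the corresponding translate of $\mu$; in particular $\mu$ has no translation invariant extension to $\{0,1\}^{\mathbb{Z}^2}$.
   Context: A probability measure $\mu_\Lambda$ on $\{0,1\}^\Lambda$, $\Lambda\subset\mathbb{Z}^d$, is LTI if for all $A,A'\subset\Lambda$ with $A'$ a translate of $A$, the marginal on $\{0,1\}^{A'}$ is the translate of the marginal on $\{0,1\}^A$. A translation invariant extension is a $\mathbb{Z}^2$-translation invariant probability measure on $\{0,1\}^{\mathbb{Z}^2}$ with marginal $\mu$ on $\Lambda$. *)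

theory Defs
  imports "HOL-Probability.Probability"
begin

type_synonym site = "int \<times> int"
type_synonym config = "site \<Rightarrow> bool"

definition conf :: "site set \<Rightarrow> config" where
  "conf S = (\<lambda>x. x \<in> S)"

definition tr :: "site \<Rightarrow> site \<Rightarrow> site" where
  "tr v x = (fst x + fst v, snd x + snd v)"

definition translate_set :: "site \<Rightarrow> site set \<Rightarrow> site set" where
  "translate_set v A = tr v ` A"

definition shift :: "site \<Rightarrow> config \<Rightarrow> config" where
  "shift v \<eta> = (\<lambda>x. \<eta> (fst x - fst v, snd x - snd v))"

text \<open>Restriction of a configuration to A (sites outside A are set to 0).
  A probability measure on the finite set {0,1}^A is represented by a pmf on
  configurations vanishing outside A.\<close>
definition restr :: "site set \<Rightarrow> config \<Rightarrow> config" where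
  "restr A \<eta> = (\<lambda>x. if x \<in> A then \<eta> x else False)"

definition supported_on :: "site set \<Rightarrow> config pmf \<Rightarrow> bool" where
  "supported_on A p \<longleftrightarrow> (\<forall>\<eta>\<in>set_pmf p. \<forall>x. x \<notin> A \<longrightarrow> \<not> \<eta> x)"

definition marginal :: "site set \<Rightarrow> config pmf \<Rightarrow> config pmf" where
  "marginal A p = map_pmf (restr A) p"

definition LTI :: "site set \<Rightarrow> config pmf \<Rightarrow> bool" where
  "LTI \<Lambda> p \<longleftrightarrow> (\<forall>A A' v. A \<subseteq> \<Lambda> \<longrightarrow> A' \<subseteq> \<Lambda> \<longrightarrow> A' = translate_set v A \<longrightarrow>
        marginal A' p = map_pmf (shift v) (marginal A p))"

definition square :: "int \<Rightarrow> int \<Rightarrow> int \<Rightarrow> site set" where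
  "square a b n = {a..a + n - 1} \<times> {b..b + n - 1}"

definition Lam :: "site set" where
  "Lam = square 0 0 2"

definition mu :: "config pmf" where
  "mu = pmf_of_set {conf {(0,0)}, conf {(0,0),(0,1),(1,0)},
                    conf {(0,1),(1,1)}, conf {(1,0),(1,1)}}"

definition cfg_space :: "site set \<Rightarrow> (site \<Rightarrow> bool) measure" where
  "cfg_space A = PiM A (\<lambda>_. count_space UNIV)"

definition TI_extension :: "site set \<Rightarrow> config pmf \<Rightarrow> config measure \<Rightarrow> bool" where
  "TI_extension \<Lambda> p M \<longleftrightarrow>
     prob_space M \<and> sets M = sets (cfg_space UNIV) \<and>
     (\<forall>v. distr M M (shift v) = M) \<and>
     distr M (cfg_space \<Lambda>) (\<lambda>\<omega>. restrict \<omega> \<Lambda>) =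
       distr (measure_pmf p) (cfg_space \<Lambda>) (\<lambda>\<eta>. restrict \<eta> \<Lambda>)"

end

theory Submission
  imports Defs
begin

text \<open>
  Local translation invariance only constrains the marginals of \<open>\<mu>\<close> on the overlaps
  \<open>\<Lambda> \<inter> (\<Lambda> + v)\<close>, and there are just nine vectors \<open>v\<close> with a nonempty overlap; each is
  checked directly.

  For the non-extendability, every configuration in the support of a compatible measure \<open>\<nu>\<close>
  on the \<open>3\<times>3\<close> square shows one of the four patterns of \<open>\<mu>\<close> in each of its four \<open>2\<times>2\<close>
  windows, and a finite case check shows that no configuration does. A translation invariant
  extension would have the pattern of \<open>\<mu>\<close> almost surely in the window at the origin, hence by
  invariance almost surely in every window, which is the same contradiction.
\<close>

lemma conf_eq_iff [simp]: "conf S = conf T \<longleftrightarrow> S = T"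
  by (auto simp: conf_def fun_eq_iff)

lemma restr_conf: "restr B (conf S) = conf (B \<inter> S)"
  by (auto simp: restr_def conf_def)

lemma mem_tr_image: "x \<in> tr v ` A \<longleftrightarrow> (fst x - fst v, snd x - snd v) \<in> A"
proof
  assume "(fst x - fst v, snd x - snd v) \<in> A"
  then show "x \<in> tr v ` A"
    by (auto simp: tr_def image_iff intro!: bexI[of _ "(fst x - fst v, snd x - snd v)"])
qed (auto simp: tr_def)

lemma shift_conf: "shift v (conf S) = conf (tr v ` S)"
  by (simp add: shift_def conf_def mem_tr_image)

lemma Lam_eq: "Lam = {(0,0), (0,1), (1,0), (1,1)}"
  by (auto simp: Lam_def square_def)

lemma set_pmf_mu:
  "set_pmf mu = conf ` {{(0,0)}, {(0,0),(0,1),(1,0)}, {(0,1),(1,1)}, {(1,0),(1,1)}}"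
  unfolding mu_def by (subst set_pmf_of_set) auto

lemma map_pmf_mu:
  "map_pmf f mu = pmf_of_multiset {#f (conf {(0,0)}), f (conf {(0,0),(0,1),(1,0)}),
                                    f (conf {(0,1),(1,1)}), f (conf {(1,0),(1,1)})#}"
proof -
  have "mset_set {conf {(0::int,0::int)}, conf {(0,0),(0,1),(1,0)}, conf {(0,1),(1,1)}, conf {(1,0),(1,1)}}
      = {#conf {(0,0)}, conf {(0,0),(0,1),(1,0)}, conf {(0,1),(1,1)}, conf {(1,0),(1,1)}#}"
    by (simp add: doubleton_eq_iff insert_eq_iff)
  then show ?thesis
    unfolding mu_def by (subst map_pmf_of_set) auto
qed

lemma LTI_if_overlap_marginals:
  assumes overlap: "\<And>v. map_pmf (restr (\<Lambda> \<inter> tr v ` \<Lambda>)) p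
                      = map_pmf (restr (\<Lambda> \<inter> tr v ` \<Lambda>) \<circ> shift v) p"
  shows "LTI \<Lambda> p"
  unfolding LTI_def
proof (intro allI impI)
  fix A A' v
  assume "A \<subseteq> \<Lambda>" "A' \<subseteq> \<Lambda>" and A'_eq: "A' = translate_set v A"
  define B where "B = \<Lambda> \<inter> tr v ` \<Lambda>"
  have "A' \<subseteq> B"
    using \<open>A \<subseteq> \<Lambda>\<close> \<open>A' \<subseteq> \<Lambda>\<close> A'_eq by (auto simp: B_def translate_set_def)
  then have restr_restr: "restr A' (restr B \<eta>) = restr A' \<eta>" for \<eta>
    by (auto simp: restr_def fun_eq_iff)
  have restr_shift: "restr A' (shift v \<eta>) = shift v (restr A \<eta>)" for \<eta>
    using A'_eq by (auto simp: restr_def shift_def fun_eq_iff translate_set_def mem_tr_image)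
  have "marginal A' p = map_pmf (restr A') (map_pmf (restr B) p)"
    by (simp add: marginal_def map_pmf_comp restr_restr)
  also have "\<dots> = map_pmf (restr A') (map_pmf (restr B \<circ> shift v) p)"
    using overlap by (simp add: B_def)
  also have "\<dots> = map_pmf (shift v) (marginal A p)"
    by (simp add: map_pmf_comp restr_restr restr_shift marginal_def)
  finally show "marginal A' p = map_pmf (shift v) (marginal A p)" .
qed

lemma mu_overlap_marginals:
  "map_pmf (restr (Lam \<inter> tr v ` Lam)) mu = map_pmf (restr (Lam \<inter> tr v ` Lam) \<circ> shift v) mu"
proof (cases "fst v \<in> {-1,0,1} \<and> snd v \<in> {-1,0,1}")
  case True
  then obtain a b where "v = (a,b)" "a \<in> {-1,0,1}" "b \<in> {-1,0,1}"
    by (cases v) auto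
  then show ?thesis
    by (elim insertE emptyE; simp add: Lam_eq tr_def map_pmf_mu restr_conf shift_conf
        add_mset_commute insert_commute)
next
  case False
  then have "Lam \<inter> tr v ` Lam = {}"
    by (auto simp: Lam_eq tr_def)
  moreover have "restr {} = (\<lambda>_ _. False)"
    by (simp add: restr_def fun_eq_iff)
  ultimately show ?thesis
    by (simp add: o_def)
qed

lemma LTI_mu: "LTI Lam mu"
  using mu_overlap_marginals by (rule LTI_if_overlap_marginals)

definition mu_window :: "int \<Rightarrow> int \<Rightarrow> config \<Rightarrow> bool" where
  "mu_window a b \<eta> \<longleftrightarrow>
    (\<eta>(a,b) \<and> \<not> \<eta>(a,b+1) \<and> \<not> \<eta>(a+1,b) \<and> \<not> \<eta>(a+1,b+1)) \<or>
    (\<eta>(a,b) \<and> \<eta>(a,b+1) \<and> \<eta>(a+1,b) \<and> \<not> \<eta>(a+1,b+1)) \<or>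
    (\<not> \<eta>(a,b) \<and> \<eta>(a,b+1) \<and> \<not> \<eta>(a+1,b) \<and> \<eta>(a+1,b+1)) \<or>
    (\<not> \<eta>(a,b) \<and> \<not> \<eta>(a,b+1) \<and> \<eta>(a+1,b) \<and> \<eta>(a+1,b+1))"

lemma mu_window_shift: "mu_window a b (shift v \<eta>) = mu_window (a - fst v) (b - snd v) \<eta>"
  by (simp add: mu_window_def shift_def algebra_simps)

lemma not_all_mu_windows:
  "\<not> (mu_window a b \<eta> \<and> mu_window (a+1) b \<eta> \<and> mu_window a (b+1) \<eta> \<and> mu_window (a+1) (b+1) \<eta>)"
proof -
  \<comment> \<open>\<open>pij\<close> stands for the value at \<open>(a + i, b + j)\<close>\<close>
  have "\<not> ((p00 \<and> \<not>p01 \<and> \<not>p10 \<and> \<not>p11) \<or> (p00 \<and> p01 \<and> p10 \<and> \<not>p11) \<or>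
           (\<not>p00 \<and> p01 \<and> \<not>p10 \<and> p11) \<or> (\<not>p00 \<and> \<not>p01 \<and> p10 \<and> p11)) \<or>
        \<not> ((p10 \<and> \<not>p11 \<and> \<not>p20 \<and> \<not>p21) \<or> (p10 \<and> p11 \<and> p20 \<and> \<not>p21) \<or>
           (\<not>p10 \<and> p11 \<and> \<not>p20 \<and> p21) \<or> (\<not>p10 \<and> \<not>p11 \<and> p20 \<and> p21)) \<or>
        \<not> ((p01 \<and> \<not>p02 \<and> \<not>p11 \<and> \<not>p12) \<or> (p01 \<and> p02 \<and> p11 \<and> \<not>p12) \<or>
           (\<not>p01 \<and> p02 \<and> \<not>p11 \<and> p12) \<or> (\<not>p01 \<and> \<not>p02 \<and> p11 \<and> p12)) \<or>
        \<not> ((p11 \<and> \<not>p12 \<and> \<not>p21 \<and> \<not>p22) \<or> (p11 \<and> p12 \<and> p21 \<and> \<not>p22) \<or>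
           (\<not>p11 \<and> p12 \<and> \<not>p21 \<and> p22) \<or> (\<not>p11 \<and> \<not>p12 \<and> p21 \<and> p22))"
    for p00 p01 p02 p10 p11 p12 p20 p21 p22
    by (cases p00; cases p01; cases p10; cases p11; auto)
  from this[of "\<eta>(a,b)" "\<eta>(a,b+1)" "\<eta>(a,b+1+1)" "\<eta>(a+1,b)" "\<eta>(a+1,b+1)" "\<eta>(a+1,b+1+1)"
               "\<eta>(a+1+1,b)" "\<eta>(a+1+1,b+1)" "\<eta>(a+1+1,b+1+1)"]
  show ?thesis
    unfolding mu_window_def by blast
qed

lemma mu_window_if_restr_in_support:
  assumes "restr (square a b 2) \<eta> \<in> shift (a,b) ` set_pmf mu"
  shows "mu_window a b \<eta>"
proof -
  obtain S where S: "S \<in> {{(0,0)}, {(0,0),(0,1),(1,0)}, {(0,1),(1,1)}, {(1,0),(1,1)}}"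
    and window: "restr (square a b 2) \<eta> = shift (a,b) (conf S)"
    using assms unfolding set_pmf_mu by blast
  have "\<eta> (a+x, b+y) = ((x,y) \<in> S)" if "x \<in> {0,1}" "y \<in> {0,1}" for x y
  proof -
    have "(a+x, b+y) \<in> square a b 2"
      using that by (auto simp: square_def)
    then show ?thesis
      using fun_cong[OF window, of "(a+x, b+y)"] by (simp add: restr_def shift_def conf_def)
  qed
  from this[of 0 0] this[of 0 1] this[of 1 0] this[of 1 1]
  have "\<eta> (a,b) = ((0,0) \<in> S)" "\<eta> (a,b+1) = ((0,1) \<in> S)"
    "\<eta> (a+1,b) = ((1,0) \<in> S)" "\<eta> (a+1,b+1) = ((1,1) \<in> S)"
    by simp_all
  with S show ?thesis
    unfolding mu_window_def by (elim insertE emptyE) simp_all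
qed

lemma no_compatible_measure_on_3x3:
  "\<not> (\<exists>\<nu>. supported_on (square a b 3) \<nu> \<and>
        (\<forall>i\<in>{0,1}. \<forall>j\<in>{0,1}.
           marginal (square (a + i) (b + j) 2) \<nu> = map_pmf (shift (a + i, b + j)) mu))"
proof
  assume "\<exists>\<nu>. supported_on (square a b 3) \<nu> \<and>
        (\<forall>i\<in>{0,1}. \<forall>j\<in>{0,1}.
           marginal (square (a + i) (b + j) 2) \<nu> = map_pmf (shift (a + i, b + j)) mu)"
  then obtain \<nu> where compatible: "\<And>i j. i \<in> {0,1} \<Longrightarrow> j \<in> {0,1} \<Longrightarrow>
      marginal (square (a + i) (b + j) 2) \<nu> = map_pmf (shift (a + i, b + j)) mu"
    by blast
  obtain \<eta> where \<eta>: "\<eta> \<in> set_pmf \<nu>"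
    using set_pmf_not_empty[of \<nu>] by blast
  have "mu_window (a + i) (b + j) \<eta>" if "i \<in> {0,1}" "j \<in> {0,1}" for i j
  proof (rule mu_window_if_restr_in_support)
    have "restr (square (a + i) (b + j) 2) \<eta> \<in> set_pmf (marginal (square (a + i) (b + j) 2) \<nu>)"
      using \<eta> by (simp add: marginal_def)
    then show "restr (square (a + i) (b + j) 2) \<eta> \<in> shift (a + i, b + j) ` set_pmf mu"
      using compatible[OF that] by simp
  qed
  from this[of 0 0] this[of 1 0] this[of 0 1] this[of 1 1] not_all_mu_windows[of a b \<eta>]
  show False
    by simp
qed

lemma measurable_shift: "shift v \<in> cfg_space UNIV \<rightarrow>\<^sub>M cfg_space UNIV"
  unfolding cfg_space_def shift_def
  by (rule measurable_PiM_single') (auto intro!: measurable_component_singleton)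

lemma measurable_mu_window_origin: "Measurable.pred (cfg_space Lam) (mu_window 0 0)"
proof -
  have component: "Measurable.pred (cfg_space Lam) (\<lambda>\<omega>. \<omega> x)" if "x \<in> Lam" for x
    unfolding cfg_space_def
    using measurable_component_singleton[OF that, of "\<lambda>_. count_space UNIV"] by simp
  have [measurable]:
    "Measurable.pred (cfg_space Lam) (\<lambda>\<omega>. \<omega> (0,0))" "Measurable.pred (cfg_space Lam) (\<lambda>\<omega>. \<omega> (0,1))"
    "Measurable.pred (cfg_space Lam) (\<lambda>\<omega>. \<omega> (1,0))" "Measurable.pred (cfg_space Lam) (\<lambda>\<omega>. \<omega> (1,1))"
    by (rule component, simp add: Lam_eq)+
  show ?thesis
    unfolding mu_window_def by simp measurable
qed

lemma TI_extension_AE_mu_window: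
  assumes "TI_extension Lam mu M"
  shows "AE \<omega> in M. mu_window a b \<omega>"
proof -
  from assms have sets_M: "sets M = sets (cfg_space UNIV)"
    and invariant: "\<And>v. distr M M (shift v) = M"
    and marginal_Lam: "distr M (cfg_space Lam) (\<lambda>\<omega>. restrict \<omega> Lam) =
                       distr (measure_pmf mu) (cfg_space Lam) (\<lambda>\<eta>. restrict \<eta> Lam)"
    unfolding TI_extension_def by blast+
  have restrict_measurable: "(\<lambda>\<omega>. restrict \<omega> Lam) \<in> M \<rightarrow>\<^sub>M cfg_space Lam"
    using measurable_cong_sets[OF sets_M refl]
    by (metis cfg_space_def measurable_restrict_subset subset_UNIV)
  have shift_measurable: "shift v \<in> M \<rightarrow>\<^sub>M M" for v
    using measurable_shift measurable_cong_sets[OF sets_M sets_M] by simp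
  have "AE \<eta> in measure_pmf mu. mu_window 0 0 (restrict \<eta> Lam)"
    by (rule AE_pmfI) (unfold set_pmf_mu, elim imageE insertE emptyE,
        simp_all add: mu_window_def Lam_eq conf_def)
  then have "AE \<omega> in distr (measure_pmf mu) (cfg_space Lam) (\<lambda>\<eta>. restrict \<eta> Lam). mu_window 0 0 \<omega>"
  proof (subst AE_distr_iff)
    show "(\<lambda>\<eta>. restrict \<eta> Lam) \<in> measure_pmf mu \<rightarrow>\<^sub>M cfg_space Lam"
      by (simp add: cfg_space_def space_PiM)
    show "{\<omega> \<in> space (cfg_space Lam). mu_window 0 0 \<omega>} \<in> sets (cfg_space Lam)"
      using measurable_mu_window_origin by (simp add: Measurable.pred_def)
  qed
  then have "AE \<omega> in M. mu_window 0 0 (restrict \<omega> Lam)"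
    unfolding marginal_Lam[symmetric] by (rule AE_distrD[OF restrict_measurable])
  then have origin: "AE \<omega> in M. mu_window 0 0 \<omega>"
    by (rule AE_mp) (rule AE_I2, simp add: mu_window_def Lam_eq)
  have "AE \<omega> in distr M M (shift (-a, -b)). mu_window 0 0 \<omega>"
    unfolding invariant by (rule origin)
  then have "AE \<omega> in M. mu_window 0 0 (shift (-a, -b) \<omega>)"
    by (rule AE_distrD[OF shift_measurable])
  then show ?thesis
    by (simp add: mu_window_shift)
qed

lemma no_TI_extension: "\<not> (\<exists>M. TI_extension Lam mu M)"
proof
  assume "\<exists>M. TI_extension Lam mu M"
  then obtain M where M: "TI_extension Lam mu M" ..
  then interpret prob_space M
    unfolding TI_extension_def by blast
  have "AE \<omega> in M. mu_window 0 0 \<omega> \<and> mu_window (0+1) 0 \<omega> \<and> mu_window 0 (0+1) \<omega>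
                    \<and> mu_window (0+1) (0+1) \<omega>"
    using TI_extension_AE_mu_window[OF M] by (simp add: AE_conj_iff)
  then have "AE \<omega> in M. False"
    by (rule AE_mp) (use not_all_mu_windows in blast)
  then show False
    by simp
qed

theorem mainTheorem13:
  shows "supported_on Lam mu \<and> LTI Lam mu
    \<and> (\<forall>a b. Lam \<subseteq> square a b 3 \<longrightarrow>
          \<not> (\<exists>\<nu>. supported_on (square a b 3) \<nu> \<and>
                (\<forall>i\<in>{0,1}. \<forall>j\<in>{0,1}.
                   marginal (square (a + i) (b + j) 2) \<nu> = map_pmf (shift (a + i, b + j)) mu)))
    \<and> \<not> (\<exists>M. TI_extension Lam mu M)"
proof (intro conjI allI impI)
  show "supported_on Lam mu"
    unfolding supported_on_def set_pmf_mu by (auto simp: conf_def Lam_eq)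
  show "LTI Lam mu"
    by (rule LTI_mu)
  show "\<not> (\<exists>M. TI_extension Lam mu M)"
    by (rule no_TI_extension)
qed (rule no_compatible_measure_on_3x3)

end
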